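(* Let $\mathbb F$ be a field and let $D$ be an $m\times m$ differential matrix over $\mathbb F$. Then there exist an almost-Jordan differential matrix $\underline D$ and a triangular matrix $B$ (both $m\times m$ over $\mathbb F$) such that $D = B\,\underline D\,B^{-1}$.
   Context: A differential matrix is a square matrix $D$ with $D^2=0$. A differential matrix is Jordan if it is block-diagonal with every diagonal block equal to either the $1\times 1$ zero matrix $J=[0]$ or the $2\times 2$ matrix $K=\begin{bmatrix}0&1\\0&0\end{bmatrix}$. A differential matrix $\underline D$ is almost-Jordan if there is a permutation matrix $P$ such that $P^{-1}\underline D P$ is Jordan. A square matrix is called triangular if it is upper-triangular and invertible. *)

theory Defs
  imports "Jordan_Normal_Form.Jordan_Normal_Form" "HOL-Combinatorics.Permutations"
begin

definition differential_mat :: "'a::field mat \<Rightarrow> bool" where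
  "differential_mat D \<longleftrightarrow> square_mat D \<and> D * D = 0\<^sub>m (dim_row D) (dim_col D)"

(* Jordan differential matrix: block diagonal with blocks J = [0] (jordan_block 1 0)
   or K = [[0,1],[0,0]] (jordan_block 2 0). *)
definition jordan_differential_mat :: "'a::field mat \<Rightarrow> bool" where
  "jordan_differential_mat D \<longleftrightarrow>
     (\<exists>bs. set bs \<subseteq> {1, 2} \<and> D = jordan_matrix (map (\<lambda>b. (b, 0)) bs))"

definition permutation_mat :: "nat \<Rightarrow> 'a::field mat \<Rightarrow> bool" where
  "permutation_mat n P \<longleftrightarrow>
     (\<exists>p. p permutes {..<n} \<and> P = mat n n (\<lambda>(i, j). if i = p j then 1 else 0))"

definition almost_jordan_mat :: "'a::field mat \<Rightarrow> bool" where
  "almost_jordan_mat D \<longleftrightarrow> differential_mat D \<and>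
     (\<exists>P Pinv. permutation_mat (dim_row D) P \<and> Pinv \<in> carrier_mat (dim_row D) (dim_row D) \<and>
        P * Pinv = 1\<^sub>m (dim_row D) \<and> Pinv * P = 1\<^sub>m (dim_row D) \<and>
        jordan_differential_mat (Pinv * D * P))"

(* "triangular" in the paper: upper triangular and invertible *)
definition triangular_mat :: "'a::field mat \<Rightarrow> bool" where
  "triangular_mat B \<longleftrightarrow> upper_triangular B \<and> invertible_mat B"

end

theory Submission
  imports Defs
begin

text \<open>
  Let \<open>c\<close> be the first nonzero column of \<open>D\<close> and \<open>r\<close> the last nonzero row in that column.
  Replacing \<open>e\<^sub>r\<close> by \<open>D e\<^sub>c\<close> and every \<open>e\<^sub>j\<close> with \<open>j \<noteq> r, c\<close> by
  \<open>e\<^sub>j - (D\<^sub>r\<^sub>j / D\<^sub>r\<^sub>c) e\<^sub>c\<close> is an upper triangular change of basis, because \<open>D\<close> vanishes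
  left of column \<open>c\<close> and below row \<open>r\<close> in column \<open>c\<close>. As \<open>D\<^sup>2 = 0\<close>, we get \<open>r \<noteq> c\<close>,
  and in the new basis column \<open>c\<close> becomes \<open>e\<^sub>r\<close>, row \<open>r\<close> becomes \<open>e\<^sub>c\<^sup>T\<close> and row
  \<open>c\<close> and column \<open>r\<close> vanish. Hence \<open>D\<close> is triangularly similar to \<open>M + E\<^sub>r\<^sub>c\<close> with
  \<open>M\<^sup>2 = 0\<close> and \<open>M\<close> supported away from \<open>r, c\<close>, and induction on the support makes \<open>D\<close>
  triangularly similar to a 0/1 matrix with ones at \<open>(r\<^sub>1, c\<^sub>1), \<dots>, (r\<^sub>k, c\<^sub>k)\<close>, all
  \<open>2k\<close> indices distinct. Listing the indices as \<open>r\<^sub>1, c\<^sub>1, \<dots>, r\<^sub>k, c\<^sub>k\<close> followed by the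
  unused ones is a permutation turning this matrix into \<open>k\<close> blocks \<open>K\<close> followed by blocks \<open>J\<close>.
\<close>

lemma index_mult_mat_sum:
  assumes "A \<in> carrier_mat n k" "B \<in> carrier_mat k m" "i < n" "j < m"
  shows "(A * B) $$ (i, j) = (\<Sum>l<k. A $$ (i, l) * B $$ (l, j))"
  using assms by (auto simp: scalar_prod_def lessThan_atLeast0 intro!: sum.cong)

lemma mult_conjugate_assoc:
  fixes A B N Binv Ainv :: "'a::semiring_1 mat"
  assumes "A \<in> carrier_mat n n" "B \<in> carrier_mat n n" "N \<in> carrier_mat n n"
    "Binv \<in> carrier_mat n n" "Ainv \<in> carrier_mat n n"
  shows "A * B * N * (Binv * Ainv) = A * (B * N * Binv) * Ainv"
  using assms by (simp add: assoc_mult_mat[of _ n n _ n _ n])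

lemma right_inverse_mult_mat:
  fixes A B Ainv Binv :: "'a::semiring_1 mat"
  assumes "A \<in> carrier_mat n n" "B \<in> carrier_mat n n"
    "Binv \<in> carrier_mat n n" "Ainv \<in> carrier_mat n n"
    "A * Ainv = 1\<^sub>m n" "B * Binv = 1\<^sub>m n"
  shows "A * B * (Binv * Ainv) = 1\<^sub>m n"
proof -
  have "A * B * (Binv * Ainv) = A * B * 1\<^sub>m n * (Binv * Ainv)"
    using assms(1,2) by simp
  also have "\<dots> = A * (B * 1\<^sub>m n * Binv) * Ainv"
    by (rule mult_conjugate_assoc[OF assms(1,2) one_carrier_mat assms(3,4)])
  also have "\<dots> = 1\<^sub>m n"
    using assms by simp
  finally show ?thesis .
qed

lemma upper_triangular_mult:
  fixes A B :: "'a::comm_ring_1 mat"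
  assumes A: "A \<in> carrier_mat n n" and B: "B \<in> carrier_mat n n"
    and utA: "upper_triangular A" and utB: "upper_triangular B"
  shows "upper_triangular (A * B)"
proof
  fix i j assume ij: "j < i" "i < dim_row (A * B)"
  have "A $$ (i, k) * B $$ (k, j) = 0" if "k < n" for k
  proof (cases "k < i")
    case True
    then show ?thesis using upper_triangularD[OF utA] A ij by simp
  next
    case False
    then show ?thesis using upper_triangularD[OF utB, of j k] B ij that by simp
  qed
  then show "(A * B) $$ (i, j) = 0"
    using index_mult_mat_sum[OF A B, of i j] A ij by simp
qed

lemma upper_triangular_invertible:
  fixes A :: "'a::field mat"
  assumes A: "A \<in> carrier_mat n n" and "upper_triangular A"
    and "\<And>i. i < n \<Longrightarrow> A $$ (i, i) \<noteq> 0"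
  obtains B where "B \<in> carrier_mat n n" "A * B = 1\<^sub>m n" "B * A = 1\<^sub>m n"
proof -
  have "0 \<notin> set (diag_mat A)" using assms by (auto simp: diag_mat_def)
  then have "det A \<noteq> 0" using upper_triangular_imp_det_eq_0_iff[OF assms(1,2)] by simp
  from det_non_zero_imp_unit[OF A this, unfolded Units_def, of "()"]
  show ?thesis using that by (auto simp: ring_mat_def)
qed

definition identity_outside :: "nat \<Rightarrow> nat set \<Rightarrow> 'a::field mat \<Rightarrow> bool" where
  "identity_outside n S A \<longleftrightarrow> A \<in> carrier_mat n n \<and>
     (\<forall>i<n. \<forall>j<n. (i \<notin> S \<or> j \<notin> S) \<longrightarrow> A $$ (i, j) = (if i = j then 1 else 0))"

definition supported_on :: "nat \<Rightarrow> nat set \<Rightarrow> 'a::field mat \<Rightarrow> bool" where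
  "supported_on n S A \<longleftrightarrow> A \<in> carrier_mat n n \<and>
     (\<forall>i<n. \<forall>j<n. A $$ (i, j) \<noteq> 0 \<longrightarrow> i \<in> S \<and> j \<in> S)"

lemma identity_outside_carrier: "identity_outside n S A \<Longrightarrow> A \<in> carrier_mat n n"
  by (simp add: identity_outside_def)

lemma identity_outside_mono: "identity_outside n I A \<Longrightarrow> I \<subseteq> S \<Longrightarrow> identity_outside n S A"
  unfolding identity_outside_def by blast

lemma identity_outside_row_sum:
  assumes "identity_outside n S A" "i < n" "i \<notin> S"
  shows "(\<Sum>k<n. A $$ (i, k) * f k) = f i"
proof -
  have "(\<Sum>k<n. A $$ (i, k) * f k) = (\<Sum>k<n. if k = i then f k else 0)"
    using assms by (intro sum.cong) (auto simp: identity_outside_def)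
  then show ?thesis using assms by simp
qed

lemma identity_outside_col_sum:
  assumes "identity_outside n S A" "j < n" "j \<notin> S"
  shows "(\<Sum>k<n. f k * A $$ (k, j)) = f j"
proof -
  have "(\<Sum>k<n. f k * A $$ (k, j)) = (\<Sum>k<n. if k = j then f k else 0)"
    using assms by (intro sum.cong) (auto simp: identity_outside_def)
  then show ?thesis using assms by simp
qed

lemma identity_outside_mult:
  assumes A: "identity_outside n S A" and B: "identity_outside n S B"
  shows "identity_outside n S (A * B)"
  unfolding identity_outside_def
proof (intro conjI allI impI)
  have cA: "A \<in> carrier_mat n n" and cB: "B \<in> carrier_mat n n"
    using A B by (simp_all add: identity_outside_carrier)
  then show "A * B \<in> carrier_mat n n" by simp
  fix i j assume ij: "i < n" "j < n" "i \<notin> S \<or> j \<notin> S"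
  then consider "i \<notin> S" | "j \<notin> S" by blast
  then show "(A * B) $$ (i, j) = (if i = j then 1 else 0)"
  proof cases
    case 1
    then show ?thesis using index_mult_mat_sum[OF cA cB ij(1,2)]
      identity_outside_row_sum[OF A ij(1) 1] B ij by (auto simp: identity_outside_def)
  next
    case 2
    then show ?thesis using index_mult_mat_sum[OF cA cB ij(1,2)]
      identity_outside_col_sum[OF B ij(2) 2] A ij by (auto simp: identity_outside_def)
  qed
qed

lemma identity_outside_inverse:
  assumes A: "identity_outside n S A" and B: "B \<in> carrier_mat n n"
    and AB: "A * B = 1\<^sub>m n" and BA: "B * A = 1\<^sub>m n"
  shows "identity_outside n S B"
  unfolding identity_outside_def
proof (intro conjI allI impI)
  have cA: "A \<in> carrier_mat n n" using A by (rule identity_outside_carrier)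
  show "B \<in> carrier_mat n n" by fact
  fix i j assume ij: "i < n" "j < n" "i \<notin> S \<or> j \<notin> S"
  then consider "i \<notin> S" | "j \<notin> S" by blast
  then show "B $$ (i, j) = (if i = j then 1 else 0)"
  proof cases
    case 1
    have "(A * B) $$ (i, j) = B $$ (i, j)"
      using index_mult_mat_sum[OF cA B ij(1,2)] identity_outside_row_sum[OF A ij(1) 1] by simp
    then show ?thesis using AB ij by simp
  next
    case 2
    have "(B * A) $$ (i, j) = B $$ (i, j)"
      using index_mult_mat_sum[OF B cA ij(1,2)] identity_outside_col_sum[OF A ij(2) 2] by simp
    then show ?thesis using BA ij by simp
  qed
qed

lemma identity_outside_mult_left_fix:
  assumes A: "identity_outside n I A" and R: "R \<in> carrier_mat n n"
    and rows: "\<And>i j. i < n \<Longrightarrow> j < n \<Longrightarrow> R $$ (i, j) \<noteq> 0 \<Longrightarrow> i \<notin> I"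
  shows "A * R = R"
proof (rule eq_matI)
  fix i j assume "i < dim_row R" "j < dim_col R"
  then have ij: "i < n" "j < n" using R by auto
  have "A $$ (i, k) * R $$ (k, j) = (if k = i then R $$ (i, j) else 0)" if "k < n" for k
    using A rows[OF that ij(2)] ij that by (cases "R $$ (k, j) = 0") (auto simp: identity_outside_def)
  then show "(A * R) $$ (i, j) = R $$ (i, j)"
    using index_mult_mat_sum[OF identity_outside_carrier[OF A] R ij] ij by simp
qed (use A R in \<open>auto simp: identity_outside_def\<close>)

lemma identity_outside_mult_right_fix:
  assumes A: "identity_outside n I A" and R: "R \<in> carrier_mat n n"
    and cols: "\<And>i j. i < n \<Longrightarrow> j < n \<Longrightarrow> R $$ (i, j) \<noteq> 0 \<Longrightarrow> j \<notin> I"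
  shows "R * A = R"
proof (rule eq_matI)
  fix i j assume "i < dim_row R" "j < dim_col R"
  then have ij: "i < n" "j < n" using R by auto
  have "R $$ (i, k) * A $$ (k, j) = (if k = j then R $$ (i, j) else 0)" if "k < n" for k
    using A cols[OF ij(1) that] ij that by (cases "R $$ (i, k) = 0") (auto simp: identity_outside_def)
  then show "(R * A) $$ (i, j) = R $$ (i, j)"
    using index_mult_mat_sum[OF R identity_outside_carrier[OF A] ij] ij by simp
qed (use A R in \<open>auto simp: identity_outside_def\<close>)

lemma supported_on_conjugate:
  assumes A: "identity_outside n S A" and B: "identity_outside n S B" and D: "supported_on n S D"
  shows "supported_on n S (A * D * B)"
proof -
  have cA: "A \<in> carrier_mat n n" and cB: "B \<in> carrier_mat n n" and cD: "D \<in> carrier_mat n n"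
    using A B D by (auto simp: identity_outside_def supported_on_def)
  have "i \<in> S \<and> j \<in> S" if ij: "i < n" "j < n" and nz: "(A * D * B) $$ (i, j) \<noteq> 0" for i j
  proof
    have ADB: "(A * D * B) $$ (i, j) = (\<Sum>k<n. (A * D) $$ (i, k) * B $$ (k, j))"
      using index_mult_mat_sum[of "A * D" n n B n i j] cA cB cD ij by auto
    have AD: "(A * D) $$ (i, k) = (\<Sum>l<n. A $$ (i, l) * D $$ (l, k))" if "k < n" for k
      using index_mult_mat_sum[OF cA cD ij(1) that] .
    show "i \<in> S"
    proof (rule ccontr)
      assume i: "i \<notin> S"
      have "(A * D) $$ (i, k) = 0" if "k < n" for k
        using AD[OF that] identity_outside_row_sum[OF A ij(1) i] D ij(1) that i
        by (auto simp: supported_on_def)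
      then show False using nz ADB by simp
    qed
    show "j \<in> S"
    proof (rule ccontr)
      assume j: "j \<notin> S"
      have "(A * D * B) $$ (i, j) = (\<Sum>l<n. A $$ (i, l) * D $$ (l, j))"
        using ADB identity_outside_col_sum[OF B ij(2) j] AD[OF ij(2)] by simp
      also have "\<dots> = 0" using D ij j by (auto simp: supported_on_def intro!: sum.neutral)
      finally show False using nz by simp
    qed
  qed
  then show ?thesis using cA cB cD by (auto simp: supported_on_def)
qed

section \<open>Rook matrices\<close>

definition rook_mat :: "nat \<Rightarrow> (nat \<times> nat) list \<Rightarrow> 'a::field mat" where
  "rook_mat n ps = mat n n (\<lambda>(i, j). if (i, j) \<in> set ps then 1 else 0)"

definition disjoint_pairs :: "nat set \<Rightarrow> (nat \<times> nat) list \<Rightarrow> bool" where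
  "disjoint_pairs S ps \<longleftrightarrow> distinct (map fst ps @ map snd ps) \<and> set (map fst ps @ map snd ps) \<subseteq> S"

lemma rook_mat_carrier: "rook_mat n ps \<in> carrier_mat n n"
  by (simp add: rook_mat_def)

lemma rook_mat_Cons:
  "p \<notin> set ps \<Longrightarrow> rook_mat n (p # ps) = rook_mat n ps + rook_mat n [p]"
  by (rule eq_matI) (auto simp: rook_mat_def)

lemma identity_outside_conjugate_rook_mat_Cons:
  assumes B: "identity_outside n I B" and Binv: "identity_outside n I Binv"
    and ps: "disjoint_pairs I ps" and r: "r \<notin> I" and c: "c \<notin> I"
  shows "B * rook_mat n ((r, c) # ps) * Binv = B * rook_mat n ps * Binv + rook_mat n [(r, c)]"
proof -
  have carrier: "B \<in> carrier_mat n n" "Binv \<in> carrier_mat n n"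
    using B Binv by (simp_all add: identity_outside_carrier)
  have "(r, c) \<notin> set ps" using ps r by (force simp: disjoint_pairs_def)
  then have "B * rook_mat n ((r, c) # ps) * Binv = B * rook_mat n ps * Binv + B * rook_mat n [(r, c)] * Binv"
    unfolding rook_mat_Cons[OF \<open>(r, c) \<notin> set ps\<close>]
      mult_add_distrib_mat[OF carrier(1) rook_mat_carrier rook_mat_carrier]
    using carrier by (simp add: add_mult_distrib_mat[of _ n n _ _ n] rook_mat_carrier)
  moreover have "B * rook_mat n [(r, c)] = rook_mat n [(r, c)]"
    by (rule identity_outside_mult_left_fix[OF B rook_mat_carrier])
      (use r in \<open>auto simp: rook_mat_def split: if_splits\<close>)
  moreover have "rook_mat n [(r, c)] * Binv = rook_mat n [(r, c)]"
    by (rule identity_outside_mult_right_fix[OF Binv rook_mat_carrier])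
      (use c in \<open>auto simp: rook_mat_def split: if_splits\<close>)
  ultimately show ?thesis by simp
qed

lemma rook_mat_square_zero:
  assumes "distinct (map fst ps @ map snd ps)"
  shows "rook_mat n ps * rook_mat n ps = (0\<^sub>m n n :: 'a::field mat)"
proof (rule eq_matI)
  let ?R = "rook_mat n ps :: 'a mat"
  fix i j assume "i < dim_row (0\<^sub>m n n :: 'a mat)" "j < dim_col (0\<^sub>m n n :: 'a mat)"
  then have ij: "i < n" "j < n" by auto
  have "\<not> ((i, l) \<in> set ps \<and> (l, j) \<in> set ps)" for l
    using assms by force
  then have zero: "?R $$ (i, l) * ?R $$ (l, j) = 0" if "l < n" for l
    using ij that by (auto simp: rook_mat_def)
  have "(?R * ?R) $$ (i, j) = (\<Sum>l<n. ?R $$ (i, l) * ?R $$ (l, j))"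
    by (rule index_mult_mat_sum[OF rook_mat_carrier rook_mat_carrier ij])
  also have "\<dots> = 0" by (rule sum.neutral) (simp add: zero)
  finally show "(?R * ?R) $$ (i, j) = 0\<^sub>m n n $$ (i, j)" using ij by simp
qed (auto simp: rook_mat_def)

section \<open>Triangular reduction of a square-zero matrix\<close>

locale square_zero_pivot =
  fixes D :: "'a::field mat" and n r c :: nat
  assumes D_carrier: "D \<in> carrier_mat n n"
    and square_zero: "D * D = 0\<^sub>m n n"
    and r_less: "r < n" and c_less: "c < n"
    and pivot_nonzero: "D $$ (r, c) \<noteq> 0"
    and columns_before_pivot: "\<And>i j. i < n \<Longrightarrow> j < c \<Longrightarrow> D $$ (i, j) = 0"
    and below_pivot: "\<And>i. r < i \<Longrightarrow> i < n \<Longrightarrow> D $$ (i, c) = 0"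
begin

lemma pivot_off_diagonal: "r \<noteq> c"
proof
  assume rc: "r = c"
  have "D $$ (c, k) * D $$ (k, c) = 0" if "k < n" "k \<noteq> c" for k
  proof (cases k c rule: linorder_cases)
    case less
    then show ?thesis using columns_before_pivot[OF c_less less] by simp
  next
    case greater
    then show ?thesis using below_pivot[OF _ that(1)] rc by simp
  qed (use that in simp)
  then have "(D * D) $$ (c, c) = D $$ (c, c) * D $$ (c, c)"
    using index_mult_mat_sum[OF D_carrier D_carrier c_less c_less] c_less
    by (simp add: sum.remove[of _ c] sum.neutral)
  then show False using square_zero c_less pivot_nonzero rc by simp
qed

lemma pivot_in_support: "supported_on n S D \<Longrightarrow> r \<in> S \<and> c \<in> S"
  using r_less c_less pivot_nonzero by (auto simp: supported_on_def)

definition pivot_basis :: "'a mat" where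
  "pivot_basis = mat n n (\<lambda>(i, j).
     if j = r then D $$ (i, c)
     else if j = c then (if i = c then 1 else 0)
     else (if i = j then 1 else 0) - (if i = c then D $$ (r, j) / D $$ (r, c) else 0))"

lemma pivot_basis_carrier: "pivot_basis \<in> carrier_mat n n"
  by (simp add: pivot_basis_def)

lemma pivot_basis_upper_triangular: "upper_triangular pivot_basis"
proof
  fix i j assume ji: "j < i" "i < dim_row pivot_basis"
  then have i: "i < n" and j: "j < n" by (simp_all add: pivot_basis_def)
  consider "j = r" | "j = c" "j \<noteq> r" | "j \<noteq> r" "j \<noteq> c" by blast
  then show "pivot_basis $$ (i, j) = 0"
  proof cases
    case 1
    then show ?thesis using below_pivot[of i] ji i j by (simp add: pivot_basis_def)
  next
    case 2
    then show ?thesis using ji i j by (simp add: pivot_basis_def)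
  next
    case 3
    have "D $$ (r, j) = 0" if "i = c" using columns_before_pivot[OF r_less] that ji by simp
    then show ?thesis using 3 ji i j by (simp add: pivot_basis_def)
  qed
qed

lemma pivot_basis_diagonal_nonzero: "i < n \<Longrightarrow> pivot_basis $$ (i, i) \<noteq> 0"
  using pivot_nonzero by (auto simp: pivot_basis_def)

lemma pivot_basis_identity_outside:
  assumes D: "supported_on n S D"
  shows "identity_outside n S pivot_basis"
proof -
  have rS: "r \<in> S" and cS: "c \<in> S" using pivot_in_support[OF D] by simp_all
  have "pivot_basis $$ (i, j) = (if i = j then 1 else 0)"
    if ij: "i < n" "j < n" "i \<notin> S \<or> j \<notin> S" for i j
  proof -
    consider "j = r" | "j = c" | "j \<noteq> r" "j \<noteq> c" by blast
    then show ?thesis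
    proof cases
      case 1
      then have "i \<notin> S" using ij rS by blast
      then have "D $$ (i, c) = 0" "i \<noteq> r"
        using D ij(1) c_less rS unfolding supported_on_def by blast+
      then show ?thesis using 1 ij by (simp add: pivot_basis_def)
    next
      case 2
      then show ?thesis using ij pivot_off_diagonal by (simp add: pivot_basis_def)
    next
      case 3
      have "D $$ (r, j) = 0" if "i = c"
        using that ij cS D r_less unfolding supported_on_def by blast
      then show ?thesis using 3 ij by (cases "i = c") (simp_all add: pivot_basis_def)
    qed
  qed
  then show ?thesis using pivot_basis_carrier by (simp add: identity_outside_def)
qed

lemma pivot_basis_row_r: "k < n \<Longrightarrow> pivot_basis $$ (r, k) = (if k = r then D $$ (r, c) else 0)"
  using pivot_off_diagonal r_less by (auto simp: pivot_basis_def)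

lemma D_pivot_basis_col_c: "k < n \<Longrightarrow> (D * pivot_basis) $$ (k, c) = pivot_basis $$ (k, r)"
proof -
  assume k: "k < n"
  have "D $$ (k, l) * pivot_basis $$ (l, c) = (if l = c then D $$ (k, c) else 0)" if "l < n" for l
    using pivot_off_diagonal that c_less by (auto simp: pivot_basis_def)
  then show ?thesis
    using index_mult_mat_sum[OF D_carrier pivot_basis_carrier k c_less] k r_less c_less
    by (simp add: pivot_basis_def)
qed

lemma D_pivot_basis_col_r: "k < n \<Longrightarrow> (D * pivot_basis) $$ (k, r) = 0"
proof -
  assume k: "k < n"
  have "(D * pivot_basis) $$ (k, r) = (\<Sum>l<n. D $$ (k, l) * D $$ (l, c))"
    using index_mult_mat_sum[OF D_carrier pivot_basis_carrier k r_less] r_less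
    by (simp add: pivot_basis_def)
  also have "\<dots> = (D * D) $$ (k, c)"
    using index_mult_mat_sum[OF D_carrier D_carrier k c_less] by simp
  finally show ?thesis using square_zero k c_less by simp
qed

lemma D_pivot_basis_row_r:
  assumes j: "j < n" "j \<noteq> r" "j \<noteq> c"
  shows "(D * pivot_basis) $$ (r, j) = 0"
proof -
  have "D $$ (r, l) * pivot_basis $$ (l, j) =
      (if l = j then D $$ (r, j) else 0) - (if l = c then D $$ (r, c) * (D $$ (r, j) / D $$ (r, c)) else 0)"
    if "l < n" for l
    using j that by (auto simp: pivot_basis_def algebra_simps)
  then have "(D * pivot_basis) $$ (r, j) = D $$ (r, j) - D $$ (r, c) * (D $$ (r, j) / D $$ (r, c))"
    using index_mult_mat_sum[OF D_carrier pivot_basis_carrier r_less j(1)] j c_less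
    by (simp add: sum_subtractf)
  then show ?thesis using pivot_nonzero by simp
qed

context
  fixes Binv :: "'a mat"
  assumes Binv_carrier: "Binv \<in> carrier_mat n n"
    and left_inverse: "Binv * pivot_basis = 1\<^sub>m n"
    and right_inverse: "pivot_basis * Binv = 1\<^sub>m n"
begin

abbreviation (input) D' where "D' \<equiv> Binv * D * pivot_basis"

lemma pivot_conjugate_carrier: "D' \<in> carrier_mat n n"
  using Binv_carrier D_carrier pivot_basis_carrier by simp

lemma pivot_conjugate_index:
  assumes "i < n" "j < n"
  shows "D' $$ (i, j) = (\<Sum>k<n. Binv $$ (i, k) * (D * pivot_basis) $$ (k, j))"
proof -
  have "D' = Binv * (D * pivot_basis)"
    using Binv_carrier D_carrier pivot_basis_carrier by (simp add: assoc_mult_mat[of _ n n _ n _ n])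
  then show ?thesis
    using index_mult_mat_sum[OF Binv_carrier _ assms] D_carrier pivot_basis_carrier by simp
qed

lemma pivot_conjugate_col_c: "i < n \<Longrightarrow> D' $$ (i, c) = (if i = r then 1 else 0)"
proof -
  assume i: "i < n"
  have "D' $$ (i, c) = (\<Sum>k<n. Binv $$ (i, k) * pivot_basis $$ (k, r))"
    using pivot_conjugate_index[OF i c_less] D_pivot_basis_col_c by simp
  also have "\<dots> = (Binv * pivot_basis) $$ (i, r)"
    using index_mult_mat_sum[OF Binv_carrier pivot_basis_carrier i r_less] by simp
  finally show ?thesis using left_inverse i r_less by simp
qed

lemma pivot_conjugate_col_r: "i < n \<Longrightarrow> D' $$ (i, r) = 0"
  using pivot_conjugate_index[OF _ r_less] D_pivot_basis_col_r by simp

lemma pivot_conjugate_row_r: "j < n \<Longrightarrow> D' $$ (r, j) = (if j = c then 1 else 0)"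
proof -
  assume j: "j < n"
  have "pivot_basis * D' = pivot_basis * Binv * (D * pivot_basis)"
    using Binv_carrier D_carrier pivot_basis_carrier by (simp add: assoc_mult_mat[of _ n n _ n _ n])
  then have intertwine: "pivot_basis * D' = D * pivot_basis"
    using right_inverse D_carrier pivot_basis_carrier by simp
  have "(pivot_basis * D') $$ (r, j) = D $$ (r, c) * D' $$ (r, j)"
    using index_mult_mat_sum[OF pivot_basis_carrier pivot_conjugate_carrier r_less j] pivot_basis_row_r r_less
    by (simp add: if_distrib[of "\<lambda>x. x * _"] cong: if_cong)
  then have row: "D $$ (r, c) * D' $$ (r, j) = (D * pivot_basis) $$ (r, j)" using intertwine by simp
  consider "j = c" | "j = r" | "j \<noteq> r" "j \<noteq> c" by blast
  then show ?thesis
  proof cases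
    case 3
    then show ?thesis using row D_pivot_basis_row_r[OF j 3] pivot_nonzero by simp
  qed (use pivot_conjugate_col_c[OF r_less] pivot_conjugate_col_r[OF r_less] pivot_off_diagonal in simp_all)
qed

lemma pivot_conjugate_square_zero: "D' * D' = 0\<^sub>m n n"
proof -
  have "D' * D' = Binv * (D * (pivot_basis * Binv) * D) * pivot_basis"
    using Binv_carrier D_carrier pivot_basis_carrier by (simp add: assoc_mult_mat[of _ n n _ n _ n])
  then show ?thesis
    using right_inverse square_zero Binv_carrier D_carrier pivot_basis_carrier by simp
qed

lemma pivot_conjugate_row_c: "j < n \<Longrightarrow> D' $$ (c, j) = 0"
proof -
  assume j: "j < n"
  have "(D' * D') $$ (r, j) = (\<Sum>k<n. if k = c then D' $$ (k, j) else 0)"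
    using index_mult_mat_sum[OF pivot_conjugate_carrier pivot_conjugate_carrier r_less j] pivot_conjugate_row_r
    by (simp add: if_distrib[of "\<lambda>x. x * _"] cong: if_cong)
  then show ?thesis using pivot_conjugate_square_zero r_less j c_less by simp
qed

end

lemma pivot_reduction:
  assumes D: "supported_on n S D"
  obtains B Binv M where "identity_outside n S B" "upper_triangular B"
    "Binv \<in> carrier_mat n n" "B * Binv = 1\<^sub>m n" "Binv * B = 1\<^sub>m n"
    "supported_on n (S - {r, c}) M" "M * M = 0\<^sub>m n n"
    "D = B * (M + rook_mat n [(r, c)]) * Binv"
proof -
  obtain Binv where Binv: "Binv \<in> carrier_mat n n"
    "pivot_basis * Binv = 1\<^sub>m n" "Binv * pivot_basis = 1\<^sub>m n"
    using upper_triangular_invertible[OF pivot_basis_carrier pivot_basis_upper_triangular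
        pivot_basis_diagonal_nonzero] by blast
  define E where "E = Binv * D * pivot_basis"
  have E: "E \<in> carrier_mat n n"
    and col_c: "\<And>i. i < n \<Longrightarrow> E $$ (i, c) = (if i = r then 1 else 0)"
    and col_r: "\<And>i. i < n \<Longrightarrow> E $$ (i, r) = 0"
    and row_r: "\<And>j. j < n \<Longrightarrow> E $$ (r, j) = (if j = c then 1 else 0)"
    and row_c: "\<And>j. j < n \<Longrightarrow> E $$ (c, j) = 0"
    and EE: "E * E = 0\<^sub>m n n"
    unfolding E_def
    using pivot_conjugate_carrier[OF Binv(1,3,2)] pivot_conjugate_col_c[OF Binv(1,3,2)]
      pivot_conjugate_col_r[OF Binv(1,3,2)] pivot_conjugate_row_r[OF Binv(1,3,2)]
      pivot_conjugate_row_c[OF Binv(1,3,2)] pivot_conjugate_square_zero[OF Binv(1,3,2)]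
    by simp_all
  define M :: "'a mat" where
    "M = mat n n (\<lambda>(i, j). if i \<in> {r, c} \<or> j \<in> {r, c} then 0 else E $$ (i, j))"
  have M: "M \<in> carrier_mat n n" by (simp add: M_def)
  have B: "identity_outside n S pivot_basis" by (rule pivot_basis_identity_outside[OF D])
  have "supported_on n S E"
    unfolding E_def
    by (rule supported_on_conjugate[OF identity_outside_inverse[OF B Binv] B D])
  then have M_support: "supported_on n (S - {r, c}) M"
    by (auto simp: supported_on_def M_def)
  have MM: "M * M = 0\<^sub>m n n"
  proof (rule eq_matI)
    fix i j assume "i < dim_row (0\<^sub>m n n :: 'a mat)" "j < dim_col (0\<^sub>m n n :: 'a mat)"
    then have ij: "i < n" "j < n" by auto
    show "(M * M) $$ (i, j) = 0\<^sub>m n n $$ (i, j)"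
    proof (cases "i \<in> {r, c} \<or> j \<in> {r, c}")
      case True
      then show ?thesis using index_mult_mat_sum[OF M M ij] ij by (auto simp: M_def)
    next
      case False
      have "M $$ (i, k) * M $$ (k, j) = E $$ (i, k) * E $$ (k, j)" if "k < n" for k
        using False ij that col_r col_c row_r row_c by (auto simp: M_def)
      then have "(M * M) $$ (i, j) = (E * E) $$ (i, j)"
        using index_mult_mat_sum[OF M M ij] index_mult_mat_sum[OF E E ij] by simp
      then show ?thesis using EE by simp
    qed
  qed (use M in auto)
  have "E = M + rook_mat n [(r, c)]"
    by (rule eq_matI) (use E col_c col_r row_r row_c pivot_off_diagonal in \<open>auto simp: M_def rook_mat_def\<close>)
  moreover have "D = pivot_basis * E * Binv"
  proof -
    have "pivot_basis * E * Binv = (pivot_basis * Binv) * D * (pivot_basis * Binv)"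
      unfolding E_def using Binv(1) D_carrier pivot_basis_carrier
      by (simp add: assoc_mult_mat[of _ n n _ n _ n])
    then show ?thesis using Binv(2) D_carrier by simp
  qed
  ultimately show thesis
    using that B pivot_basis_upper_triangular Binv M_support MM by simp
qed

end

lemma square_zero_pivot_exists:
  fixes D :: "'a::field mat"
  assumes D: "D \<in> carrier_mat n n" and DD: "D * D = 0\<^sub>m n n" and nonzero: "D \<noteq> 0\<^sub>m n n"
  obtains r c where "square_zero_pivot D n r c"
proof -
  obtain i0 j0 where ij0: "i0 < n" "j0 < n" "D $$ (i0, j0) \<noteq> 0"
    using D nonzero by (metis eq_matI carrier_matD index_zero_mat(1,2,3))
  define nonzero_col where "nonzero_col j \<longleftrightarrow> (\<exists>i<n. D $$ (i, j) \<noteq> 0)" for j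
  define c where "c = (LEAST j. nonzero_col j)"
  have c: "nonzero_col c" and "c \<le> j0"
    using ij0 LeastI[of nonzero_col j0] Least_le[of nonzero_col j0] by (auto simp: c_def nonzero_col_def)
  then have c_less: "c < n" using ij0 by simp
  have before: "D $$ (i, j) = 0" if "i < n" "j < c" for i j
    using not_less_Least[of j nonzero_col] that by (auto simp: c_def nonzero_col_def)
  define rows where "rows = {i. i < n \<and> D $$ (i, c) \<noteq> 0}"
  define r where "r = Max rows"
  have rows: "finite rows" "rows \<noteq> {}" using c by (auto simp: rows_def nonzero_col_def)
  have "r \<in> rows" unfolding r_def using rows by (rule Max_in)
  then have r: "r < n" "D $$ (r, c) \<noteq> 0" by (auto simp: rows_def)
  have below: "D $$ (i, c) = 0" if "r < i" "i < n" for i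
  proof (rule ccontr)
    assume "D $$ (i, c) \<noteq> 0"
    then have "i \<le> r" using Max_ge[OF rows(1), of i] that by (simp add: rows_def r_def)
    then show False using that by simp
  qed
  show thesis
    by (rule that, unfold_locales) (use D DD c_less before r below in auto)
qed

lemma square_zero_triangular_similar_rook:
  fixes D :: "'a::field mat"
  assumes "finite S" "supported_on n S D" "D * D = 0\<^sub>m n n"
  shows "\<exists>B Binv ps. identity_outside n S B \<and> upper_triangular B \<and> Binv \<in> carrier_mat n n \<and>
    B * Binv = 1\<^sub>m n \<and> Binv * B = 1\<^sub>m n \<and> disjoint_pairs S ps \<and> D = B * rook_mat n ps * Binv"
  using assms
proof (induction "card S" arbitrary: S D rule: less_induct)
  case less
  have D: "D \<in> carrier_mat n n" using less.prems(2) by (simp add: supported_on_def)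
  show ?case
  proof (cases "D = 0\<^sub>m n n")
    case True
    moreover have "rook_mat n [] = (0\<^sub>m n n :: 'a mat)" by (auto simp: rook_mat_def)
    ultimately show ?thesis
      by (intro exI[of _ "1\<^sub>m n"] exI[of _ "[]"]) (auto simp: identity_outside_def disjoint_pairs_def)
  next
    case False
    obtain r c where "square_zero_pivot D n r c"
      using square_zero_pivot_exists[OF D less.prems(3) False] .
    then interpret square_zero_pivot D n r c .
    obtain B Binv M where B: "identity_outside n S B" "upper_triangular B"
        "Binv \<in> carrier_mat n n" "B * Binv = 1\<^sub>m n" "Binv * B = 1\<^sub>m n"
      and M: "supported_on n (S - {r, c}) M" "M * M = 0\<^sub>m n n"
      and DM: "D = B * (M + rook_mat n [(r, c)]) * Binv"
      using pivot_reduction[OF less.prems(2)] .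
    have rc: "r \<in> S" "c \<in> S" using pivot_in_support[OF less.prems(2)] by simp_all
    have "card (S - {r, c}) < card S" using rc less.prems(1) by (intro psubset_card_mono) auto
    then obtain B' Binv' ps where B': "identity_outside n (S - {r, c}) B'" "upper_triangular B'"
        "Binv' \<in> carrier_mat n n" "B' * Binv' = 1\<^sub>m n" "Binv' * B' = 1\<^sub>m n"
      and ps: "disjoint_pairs (S - {r, c}) ps" and MB': "M = B' * rook_mat n ps * Binv'"
      using less.hyps[of "S - {r, c}" M] less.prems(1) M by blast
    have carrier: "B \<in> carrier_mat n n" "B' \<in> carrier_mat n n"
      using B(1) B'(1) by (simp_all add: identity_outside_carrier)
    have "M + rook_mat n [(r, c)] = B' * rook_mat n ((r, c) # ps) * Binv'"
      using identity_outside_conjugate_rook_mat_Cons[OF B'(1) identity_outside_inverse[OF B'(1,3-5)] ps]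
        MB' by simp
    then have "D = (B * B') * rook_mat n ((r, c) # ps) * (Binv' * Binv)"
      using DM mult_conjugate_assoc[OF carrier rook_mat_carrier B'(3) B(3)] by simp
    moreover have "(B * B') * (Binv' * Binv) = 1\<^sub>m n"
      using right_inverse_mult_mat[OF carrier B'(3) B(3) B(4) B'(4)] .
    moreover have "(Binv' * Binv) * (B * B') = 1\<^sub>m n"
      using right_inverse_mult_mat[OF B'(3) B(3) carrier(1,2) B'(5) B(5)] .
    moreover have "disjoint_pairs S ((r, c) # ps)"
      using ps rc pivot_off_diagonal by (auto simp: disjoint_pairs_def)
    moreover have "identity_outside n S (B * B')"
      using identity_outside_mult[OF B(1) identity_outside_mono[OF B'(1)]] by blast
    moreover have "upper_triangular (B * B')"
      using upper_triangular_mult[OF carrier B(2) B'(2)] .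
    ultimately show ?thesis
      using B(3) B'(3) by (intro exI[of _ "B * B'"] exI[of _ "Binv' * Binv"] exI[of _ "(r, c) # ps"]) simp
  qed
qed

section \<open>Rook matrices are almost Jordan\<close>

definition K_blocks_mat :: "nat \<Rightarrow> nat \<Rightarrow> 'a::field mat" where
  "K_blocks_mat k m = mat m m (\<lambda>(a, b). if b = Suc a \<and> even a \<and> a < 2 * k then 1 else 0)"

lemma jordan_matrix_Cons:
  "jordan_matrix ((b, a) # xs) = four_block_mat (jordan_block b a)
     (0\<^sub>m b (sum_list (map fst xs))) (0\<^sub>m (sum_list (map fst xs)) b) (jordan_matrix xs)"
  unfolding jordan_matrix_def by (simp add: Let_def jordan_matrix_def[symmetric])

lemma jordan_matrix_J_blocks: "jordan_matrix (replicate l (1::nat, 0::'a::field)) = 0\<^sub>m l l"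
proof (induction l)
  case 0
  then show ?case by (simp add: jordan_matrix_def)
next
  case (Suc l)
  have "sum_list (map fst (replicate l (1::nat, 0::'a))) = l" by (induct l) auto
  then show ?case
    by (simp only: replicate_Suc jordan_matrix_Cons Suc.IH, intro eq_matI) auto
qed

lemma K_blocks_mat_Suc:
  "four_block_mat (jordan_block 2 0) (0\<^sub>m 2 m) (0\<^sub>m m 2) (K_blocks_mat k m) =
   (K_blocks_mat (Suc k) (Suc (Suc m)) :: 'a::field mat)"
proof (rule eq_matI)
  fix i j assume "i < dim_row (K_blocks_mat (Suc k) (Suc (Suc m)) :: 'a mat)"
    "j < dim_col (K_blocks_mat (Suc k) (Suc (Suc m)) :: 'a mat)"
  then have ij: "i < 2 + m" "j < 2 + m" by (auto simp: K_blocks_mat_def)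
  have "(j - 2 = Suc (i - 2) \<and> even (i - 2) \<and> i - 2 < 2 * k) \<longleftrightarrow>
      (j = Suc i \<and> even i \<and> i < 2 * Suc k)"
    if "\<not> i < 2" "\<not> j < 2" using that by auto
  then show "four_block_mat (jordan_block 2 0) (0\<^sub>m 2 m) (0\<^sub>m m 2) (K_blocks_mat k m) $$ (i, j) =
      (K_blocks_mat (Suc k) (Suc (Suc m)) :: 'a mat) $$ (i, j)"
    using ij by (auto simp: K_blocks_mat_def less_2_cases_iff)
qed (auto simp: K_blocks_mat_def)

lemma jordan_matrix_K_J_blocks:
  "jordan_matrix (replicate k (2::nat, 0::'a::field) @ replicate l (1, 0)) = K_blocks_mat k (2 * k + l)"
proof (induction k)
  case 0
  have "K_blocks_mat 0 l = (0\<^sub>m l l :: 'a mat)" by (rule eq_matI) (auto simp: K_blocks_mat_def)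
  then show ?case using jordan_matrix_J_blocks[of l] by simp
next
  case (Suc k)
  have "sum_list (map fst (replicate k (2::nat, 0::'a) @ replicate l (1, 0))) = 2 * k + l"
    by (induct k) (auto, induct l, auto)
  then show ?case
    using jordan_matrix_Cons[of 2 "0::'a" "replicate k (2, 0) @ replicate l (1, 0)"]
      K_blocks_mat_Suc[of "2 * k + l" k] Suc.IH by simp
qed

definition perm_mat :: "nat \<Rightarrow> (nat \<Rightarrow> nat) \<Rightarrow> 'a::field mat" where
  "perm_mat m p = mat m m (\<lambda>(i, j). if i = p j then 1 else 0)"

lemma perm_mat_carrier: "perm_mat m p \<in> carrier_mat m m"
  by (simp add: perm_mat_def)

lemma perm_mat_conjugate:
  fixes N :: "'a::field mat"
  assumes p: "p permutes {..<m}" and N: "N \<in> carrier_mat m m"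
  shows "transpose_mat (perm_mat m p) * N * perm_mat m p = mat m m (\<lambda>(a, b). N $$ (p a, p b))"
proof (rule eq_matI)
  have p_less: "p x < m" if "x < m" for x using permutes_in_image[OF p] that by simp
  have P: "perm_mat m p \<in> carrier_mat m m" "transpose_mat (perm_mat m p) \<in> carrier_mat m m"
    by (simp_all add: perm_mat_def)
  have left: "(transpose_mat (perm_mat m p) * N) $$ (a, l) = N $$ (p a, l)" if "a < m" "l < m" for a l
  proof -
    have "(transpose_mat (perm_mat m p) * N) $$ (a, l) = (\<Sum>x<m. if x = p a then N $$ (p a, l) else 0)"
      unfolding index_mult_mat_sum[OF P(2) N that] using that
      by (intro sum.cong refl) (auto simp: perm_mat_def)
    then show ?thesis using p_less that by simp
  qed
  fix a b assume "a < dim_row (mat m m (\<lambda>(a, b). N $$ (p a, p b)))"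
    "b < dim_col (mat m m (\<lambda>(a, b). N $$ (p a, p b)))"
  then have ab: "a < m" "b < m" by auto
  have "(transpose_mat (perm_mat m p) * N * perm_mat m p) $$ (a, b) =
      (\<Sum>x<m. if x = p b then N $$ (p a, p b) else 0)"
    unfolding index_mult_mat_sum[OF mult_carrier_mat[OF P(2) N] P(1) ab] using ab left
    by (intro sum.cong refl) (auto simp: perm_mat_def)
  then show "(transpose_mat (perm_mat m p) * N * perm_mat m p) $$ (a, b) =
      mat m m (\<lambda>(a, b). N $$ (p a, p b)) $$ (a, b)"
    using p_less ab by simp
qed (use N in \<open>auto simp: perm_mat_def\<close>)

lemma perm_mat_inverse:
  assumes p: "p permutes {..<m}"
  shows "transpose_mat (perm_mat m p) * perm_mat m p = (1\<^sub>m m :: 'a::field mat)"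
    and "perm_mat m p * transpose_mat (perm_mat m p) = (1\<^sub>m m :: 'a::field mat)"
proof -
  have P: "perm_mat m p \<in> carrier_mat m m" "transpose_mat (perm_mat m p) \<in> carrier_mat m m"
    by (simp_all add: perm_mat_def)
  have "mat m m (\<lambda>(a, b). 1\<^sub>m m $$ (p a, p b)) = (1\<^sub>m m :: 'a mat)"
    using permutes_in_image[OF p] permutes_inj[OF p] by (intro eq_matI) (auto dest: injD)
  then show left: "transpose_mat (perm_mat m p) * perm_mat m p = (1\<^sub>m m :: 'a mat)"
    using perm_mat_conjugate[OF p one_carrier_mat] right_mult_one_mat[OF P(2)] by metis
  show "perm_mat m p * transpose_mat (perm_mat m p) = (1\<^sub>m m :: 'a mat)"
    by (rule mat_mult_left_right_inverse[OF P(2,1) left])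
qed

definition flatten_pairs :: "('a \<times> 'a) list \<Rightarrow> 'a list" where
  "flatten_pairs ps = concat (map (\<lambda>(a, b). [a, b]) ps)"

lemma flatten_pairs_Nil [simp]: "flatten_pairs [] = []"
  by (simp add: flatten_pairs_def)

lemma flatten_pairs_Cons [simp]: "flatten_pairs ((a, b) # ps) = a # b # flatten_pairs ps"
  by (simp add: flatten_pairs_def)

lemma set_flatten_pairs: "set (flatten_pairs ps) = set (map fst ps @ map snd ps)"
  by (induct ps) (auto simp: flatten_pairs_def)

lemma length_flatten_pairs: "length (flatten_pairs ps) = 2 * length ps"
  by (induct ps) (auto simp: flatten_pairs_def)

lemma distinct_flatten_pairs: "distinct (map fst ps @ map snd ps) \<Longrightarrow> distinct (flatten_pairs ps)"
  by (induct ps) (auto simp: set_flatten_pairs)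

lemma nth_flatten_pairs:
  "t < length ps \<Longrightarrow> flatten_pairs ps ! (2 * t) = fst (ps ! t) \<and> flatten_pairs ps ! Suc (2 * t) = snd (ps ! t)"
proof (induct ps arbitrary: t)
  case (Cons x ps)
  then show ?case by (cases x; cases t) auto
qed simp

lemma pair_in_flatten_pairs_iff:
  assumes L: "distinct (flatten_pairs ps @ F)"
    and ab: "a < length (flatten_pairs ps @ F)" "b < length (flatten_pairs ps @ F)"
  shows "((flatten_pairs ps @ F) ! a, (flatten_pairs ps @ F) ! b) \<in> set ps \<longleftrightarrow>
    b = Suc a \<and> even a \<and> a < 2 * length ps"
    (is "(?L ! a, ?L ! b) \<in> set ps \<longleftrightarrow> _")
proof
  assume "(?L ! a, ?L ! b) \<in> set ps"
  then obtain t where t: "t < length ps" "ps ! t = (?L ! a, ?L ! b)" by (metis in_set_conv_nth)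
  then have "?L ! (2 * t) = ?L ! a" "?L ! Suc (2 * t) = ?L ! b"
    using nth_flatten_pairs[OF t(1)] length_flatten_pairs[of ps] by (auto simp: nth_append)
  then have "2 * t = a" "Suc (2 * t) = b"
    using L ab t(1) length_flatten_pairs[of ps] by (simp_all add: nth_eq_iff_index_eq)
  then show "b = Suc a \<and> even a \<and> a < 2 * length ps" using t(1) by auto
next
  assume "b = Suc a \<and> even a \<and> a < 2 * length ps"
  then obtain t where t: "a = 2 * t" "b = Suc (2 * t)" "t < length ps" by (auto elim!: evenE)
  then have "?L ! a = fst (ps ! t)" "?L ! b = snd (ps ! t)"
    using nth_flatten_pairs[OF t(3)] length_flatten_pairs[of ps] by (auto simp: nth_append)
  then show "(?L ! a, ?L ! b) \<in> set ps" using t(3) by (metis nth_mem prod.collapse)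
qed

lemma pairing_permutation_exists:
  assumes ps: "disjoint_pairs {..<m} ps"
  obtains p where "p permutes {..<m}"
    "\<And>a b. a < m \<Longrightarrow> b < m \<Longrightarrow>
      (p a, p b) \<in> set ps \<longleftrightarrow> b = Suc a \<and> even a \<and> a < 2 * length ps"
proof -
  define L where "L = flatten_pairs ps @ filter (\<lambda>i. i \<notin> set (map fst ps @ map snd ps)) [0..<m]"
  have "distinct (map fst ps @ map snd ps)" "set (map fst ps @ map snd ps) \<subseteq> {..<m}"
    using ps by (simp_all add: disjoint_pairs_def)
  then have L: "distinct L" "set L = {..<m}"
    using distinct_flatten_pairs set_flatten_pairs[of ps] unfolding L_def by auto
  then have length_L: "length L = m" using distinct_card[OF L(1)] by simp
  define p where "p j = (if j < m then L ! j else j)" for j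
  have "bij_betw ((!) L) {..<m} {..<m}" using bij_betw_nth[OF L(1)] L(2) length_L by simp
  then have "bij_betw p {..<m} {..<m}" by (rule bij_betw_cong[THEN iffD1, rotated]) (simp add: p_def)
  then have "p permutes {..<m}" by (rule bij_imp_permutes) (simp add: p_def)
  moreover have "(p a, p b) \<in> set ps \<longleftrightarrow> b = Suc a \<and> even a \<and> a < 2 * length ps"
    if "a < m" "b < m" for a b
    using pair_in_flatten_pairs_iff[of ps _ a b] L(1) length_L that unfolding L_def p_def by auto
  ultimately show thesis by (rule that)
qed

lemma rook_mat_almost_jordan:
  assumes ps: "disjoint_pairs {..<m} ps"
  shows "almost_jordan_mat (rook_mat m ps :: 'a::field mat)"
proof -
  obtain p where p: "p permutes {..<m}"
    and pairs: "\<And>a b. a < m \<Longrightarrow> b < m \<Longrightarrow>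
      (p a, p b) \<in> set ps \<longleftrightarrow> b = Suc a \<and> even a \<and> a < 2 * length ps"
    using pairing_permutation_exists[OF ps] by blast
  define k where "k = length ps"
  have distinct: "distinct (map fst ps @ map snd ps)" and range: "set (map fst ps @ map snd ps) \<subseteq> {..<m}"
    using ps by (simp_all add: disjoint_pairs_def)
  have "2 * k = card (set (map fst ps @ map snd ps))" using distinct_card[OF distinct] by (simp add: k_def)
  also have "\<dots> \<le> m" using card_mono[OF finite_lessThan range] by simp
  finally have km: "2 * k \<le> m" .
  have "mat m m (\<lambda>(a, b). rook_mat m ps $$ (p a, p b)) = (K_blocks_mat k m :: 'a mat)"
    using permutes_in_image[OF p] pairs by (intro eq_matI) (auto simp: rook_mat_def K_blocks_mat_def k_def)
  also have "\<dots> = jordan_matrix (replicate k (2, 0) @ replicate (m - 2 * k) (1, 0))"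
    by (subst jordan_matrix_K_J_blocks) (use km in simp)
  finally have "jordan_differential_mat
      (transpose_mat (perm_mat m p) * rook_mat m ps * (perm_mat m p :: 'a mat))"
    unfolding jordan_differential_mat_def perm_mat_conjugate[OF p rook_mat_carrier]
    by (intro exI[of _ "replicate k 2 @ replicate (m - 2 * k) 1"]) auto
  moreover have "differential_mat (rook_mat m ps :: 'a mat)"
    using rook_mat_square_zero[OF distinct] by (simp add: differential_mat_def rook_mat_def)
  moreover have "permutation_mat m (perm_mat m p :: 'a mat)"
    using p by (auto simp: permutation_mat_def perm_mat_def)
  moreover have "dim_row (rook_mat m ps :: 'a mat) = m" by (simp add: rook_mat_def)
  ultimately show ?thesis
    unfolding almost_jordan_mat_def using perm_mat_inverse[OF p] perm_mat_carrier[of m p]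
    by (intro conjI exI[of _ "perm_mat m p"] exI[of _ "transpose_mat (perm_mat m p)"]) simp_all
qed

theorem theorem1p2:
  fixes D :: "'a::field mat"
  assumes "D \<in> carrier_mat m m"
    and "differential_mat D"
  shows "\<exists>Dj B Binv. Dj \<in> carrier_mat m m \<and> B \<in> carrier_mat m m \<and> Binv \<in> carrier_mat m m \<and>
           almost_jordan_mat Dj \<and> triangular_mat B \<and>
           B * Binv = 1\<^sub>m m \<and> Binv * B = 1\<^sub>m m \<and>
           D = B * Dj * Binv"
proof -
  have "supported_on m {..<m} D" "D * D = 0\<^sub>m m m"
    using assms by (simp_all add: supported_on_def differential_mat_def)
  then obtain B Binv ps where B: "identity_outside m {..<m} B" "upper_triangular B"
      "Binv \<in> carrier_mat m m" "B * Binv = 1\<^sub>m m" "Binv * B = 1\<^sub>m m"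
    and ps: "disjoint_pairs {..<m} ps" and D: "D = B * rook_mat m ps * Binv"
    using square_zero_triangular_similar_rook[of "{..<m}"] by blast
  have "B \<in> carrier_mat m m" using B(1) by (rule identity_outside_carrier)
  then have "triangular_mat B"
    using B by (auto simp: triangular_mat_def invertible_mat_def inverts_mat_def)
  then show ?thesis
    using B D rook_mat_almost_jordan[OF ps] rook_mat_carrier \<open>B \<in> carrier_mat m m\<close> by blast
qed

end
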